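(* Let $G$ be a connected quasi-transitive bipartite graph (not necessarily locally finite). Then $G$ has a periodic proper vertex-coloring with $2$ colors.
   Context: $G$ is quasi-transitive if $V(G)$ has finitely many $\mathrm{Aut}(G)$-orbits. A vertex-coloring is periodic if the subgroup of color-preserving automorphisms of $G$ has finitely many orbits on $V(G)$. *)

theory Defs
  imports Main
begin

(* A simple graph on vertex type 'a (arbitrary cardinality, not necessarily
   locally finite): E is a symmetric irreflexive adjacency relation, V(G) = UNIV. *)
definition simple_graph :: "('a \<Rightarrow> 'a \<Rightarrow> bool) \<Rightarrow> bool" where
  "simple_graph E \<longleftrightarrow> (\<forall>x y. E x y \<longrightarrow> E y x) \<and> (\<forall>x. \<not> E x x)"

definition connected_graph :: "('a \<Rightarrow> 'a \<Rightarrow> bool) \<Rightarrow> bool" where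
  "connected_graph E \<longleftrightarrow> (\<forall>x y. E\<^sup>*\<^sup>* x y)"

definition bipartite :: "('a \<Rightarrow> 'a \<Rightarrow> bool) \<Rightarrow> bool" where
  "bipartite E \<longleftrightarrow> (\<exists>A. \<forall>x y. E x y \<longrightarrow> (x \<in> A \<longleftrightarrow> y \<notin> A))"

definition graph_aut :: "('a \<Rightarrow> 'a \<Rightarrow> bool) \<Rightarrow> ('a \<Rightarrow> 'a) set" where
  "graph_aut E = {f. bij f \<and> (\<forall>x y. E x y \<longleftrightarrow> E (f x) (f y))}"

definition orbit_of :: "('a \<Rightarrow> 'a) set \<Rightarrow> 'a \<Rightarrow> 'a set" where
  "orbit_of H x = {f x | f. f \<in> H}"

definition finitely_many_orbits :: "('a \<Rightarrow> 'a) set \<Rightarrow> bool" where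
  "finitely_many_orbits H \<longleftrightarrow> finite (range (orbit_of H))"

definition quasi_transitive :: "('a \<Rightarrow> 'a \<Rightarrow> bool) \<Rightarrow> bool" where
  "quasi_transitive E \<longleftrightarrow> finitely_many_orbits (graph_aut E)"

definition color_preserving_aut :: "('a \<Rightarrow> 'a \<Rightarrow> bool) \<Rightarrow> ('a \<Rightarrow> 'c) \<Rightarrow> ('a \<Rightarrow> 'a) set" where
  "color_preserving_aut E c = {f \<in> graph_aut E. \<forall>x. c (f x) = c x}"

definition periodic_coloring :: "('a \<Rightarrow> 'a \<Rightarrow> bool) \<Rightarrow> ('a \<Rightarrow> 'c) \<Rightarrow> bool" where
  "periodic_coloring E c \<longleftrightarrow> finitely_many_orbits (color_preserving_aut E c)"

definition proper_coloring :: "('a \<Rightarrow> 'a \<Rightarrow> bool) \<Rightarrow> ('a \<Rightarrow> 'c) \<Rightarrow> bool" where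
  "proper_coloring E c \<longleftrightarrow> (\<forall>x y. E x y \<longrightarrow> c x \<noteq> c y)"

end

theory Submission
  imports Defs
begin

text \<open>A connected bipartite graph has a unique bipartition, so every automorphism either
  preserves or swaps its two classes. Colouring by the bipartition, the colour-preserving
  automorphisms are thus those that preserve the colour of a single vertex, and each of
  their orbits is an orbit of the full automorphism group intersected with a colour class:
  there are at most twice as many.\<close>

lemma bipartite_imp_proper_2_coloring:
  assumes "bipartite E"
  shows "\<exists>c :: 'a \<Rightarrow> bool. proper_coloring E c"
proof -
  obtain A where "\<forall>x y. E x y \<longrightarrow> (x \<in> A \<longleftrightarrow> y \<notin> A)"
    using assms unfolding bipartite_def by blast
  then have "proper_coloring E (\<lambda>x. x \<in> A)"
    unfolding proper_coloring_def by blast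
  then show ?thesis by blast
qed

lemma graph_aut_preserves_2_coloring:
  fixes c :: "'a \<Rightarrow> bool"
  assumes "connected_graph E" and "proper_coloring E c"
    and "g \<in> graph_aut E" and "c (g y) = c y"
  shows "c (g x) = c x"
proof -
  have "E\<^sup>*\<^sup>* y x"
    using assms(1) unfolding connected_graph_def by blast
  then show ?thesis
  proof (induction rule: rtranclp_induct)
    case base
    then show ?case using assms(4) by simp
  next
    case (step u v)
    have "E (g u) (g v)"
      using assms(3) step.hyps(2) unfolding graph_aut_def by blast
    then show ?case
      using assms(2) step.hyps(2) step.IH unfolding proper_coloring_def by blast
  qed
qed

lemma orbit_of_color_preserving_aut:
  fixes c :: "'a \<Rightarrow> bool"
  assumes "connected_graph E" and "proper_coloring E c"
  shows "orbit_of (color_preserving_aut E c) y = orbit_of (graph_aut E) y \<inter> {z. c z = c y}"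
proof
  show "orbit_of (color_preserving_aut E c) y \<subseteq> orbit_of (graph_aut E) y \<inter> {z. c z = c y}"
    unfolding orbit_of_def color_preserving_aut_def by auto
next
  show "orbit_of (graph_aut E) y \<inter> {z. c z = c y} \<subseteq> orbit_of (color_preserving_aut E c) y"
  proof
    fix z
    assume "z \<in> orbit_of (graph_aut E) y \<inter> {z. c z = c y}"
    then obtain g where g: "g \<in> graph_aut E" "z = g y" "c (g y) = c y"
      unfolding orbit_of_def by auto
    then have "g \<in> color_preserving_aut E c"
      using graph_aut_preserves_2_coloring[OF assms] unfolding color_preserving_aut_def by blast
    then show "z \<in> orbit_of (color_preserving_aut E c) y"
      using g(2) unfolding orbit_of_def by blast
  qed
qed

lemma finitely_many_orbits_restrict:
  assumes "finitely_many_orbits H" and "finite (range c)"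
    and "\<And>y. orbit_of H' y = orbit_of H y \<inter> {z. c z = c y}"
  shows "finitely_many_orbits H'"
proof -
  have "range (orbit_of H') \<subseteq>
      (\<lambda>(Y, b). Y \<inter> {z. c z = b}) ` (range (orbit_of H) \<times> range c)"
    using assms(3) by force
  moreover have "finite (range (orbit_of H) \<times> range c)"
    using assms(1,2) unfolding finitely_many_orbits_def by simp
  ultimately show ?thesis
    unfolding finitely_many_orbits_def by (meson finite_imageI finite_subset)
qed

lemma proper_2_coloring_periodic:
  fixes c :: "'a \<Rightarrow> bool"
  assumes "connected_graph E" and "quasi_transitive E" and "proper_coloring E c"
  shows "periodic_coloring E c"
  using finitely_many_orbits_restrict[OF _ _ orbit_of_color_preserving_aut[OF assms(1,3)]]
    assms(2)
  unfolding periodic_coloring_def quasi_transitive_def by simp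

theorem lemma2p9:
  fixes E :: "'a \<Rightarrow> 'a \<Rightarrow> bool"
  assumes "simple_graph E"
    and "connected_graph E"
    and "quasi_transitive E"
    and "bipartite E"
  shows "\<exists>c :: 'a \<Rightarrow> bool. proper_coloring E c \<and> periodic_coloring E c"
proof -
  obtain c :: "'a \<Rightarrow> bool" where "proper_coloring E c"
    using bipartite_imp_proper_2_coloring[OF assms(4)] by blast
  then show ?thesis
    using proper_2_coloring_periodic[OF assms(2,3)] by blast
qed

end
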